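(* Let $\{X_t,Z_t\}$ be a mean-zero jointly stationary bivariate time series with residual spectral density $f=f_{X|Z}=f_X-f_{XZ}f_{ZX}/f_Z$. Let $h$ be a spectral density and consider the privacy mechanism $\Psi_h(e^{-i\lambda})=\exp\{i\pi\tilde R(H(\lambda))\}$, where $\tilde R(x)=\mathrm{sgn}(x)R(|x|)$, $R\in\mathcal{R}$, and $H(\lambda)=\int_0^\lambda\tilde h(\omega)d\omega$ with $\tilde h=h/\langle h\rangle_\pi$. Assume in addition that $R\in\mathcal{R}_L$, i.e. $R$ is Lipschitz with constant $L_R>0$. For $0\le\delta<1$ let $$\mathcal{F}_R(f,\delta)=\Big\{h:[0,\pi]\to[0,\infty):\ \langle h\rangle_\pi=\langle f\rangle_\pi,\ \sup_{0\le\lambda\le\pi}|h(\lambda)-f(\lambda)|\le\frac{\sqrt{\delta}\,\langle f\rangle_\pi}{L_R\pi^2}\Big\}.$$ Then $\Psi_h$ is $\delta$-LIP (for $f$) if $h\in\mathcal{F}_R(f,\delta)$.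
   Context: $z=e^{-i\lambda}$; spectral densities are even functions on $[-\pi,\pi]$. Notation: $\langle u,f\rangle=(2\pi)^{-1}\int_{-\pi}^{\pi}u(\lambda)f(\lambda)d\lambda$, $\langle f\rangle=\langle1,f\rangle$, $\langle f\rangle_\pi=\pi^{-1}\int_0^\pi f(\lambda)d\lambda$. Classes: $\mathcal{R}=\{R:[0,1]\to[0,1]:R(0)=0,\ R(x)+R(1-x)=1\ \forall x\in[0,1]\}$ and $\mathcal{R}_L=\{R\in\mathcal{R}: |R(x)-R(y)|\le L_R|x-y|\ \forall x,y\in[0,1]\}$ for some $L_R>0$. The Linear Incremental Privacy of a linear filter $\Psi$ is $\mathrm{LIP}(\Psi,f)=1-\langle\Psi,f\rangle^2/(\langle\Psi\overline\Psi,f\rangle\langle f\rangle)$, with $\Psi$ evaluated at $e^{-i\lambda}$ and $\overline{\Psi(e^{-i\lambda})}=\Psi(e^{i\lambda})$; for an all-pass filter ($|\Psi(e^{-i\lambda})|=1$) it equals $1-\langle\Psi,f\rangle^2/\langle f\rangle^2$. A mechanism $\Psi$ is $\delta$-LIP for $f$ (with $0\le\delta<1$) if $\mathrm{LIP}(\Psi,f)\ge1-\delta$. *)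

theory Defs
  imports "HOL-Analysis.Analysis"
begin

definition sp_inner :: "(real \<Rightarrow> complex) \<Rightarrow> (real \<Rightarrow> real) \<Rightarrow> complex" where
  "sp_inner u f = integral {-pi..pi} (\<lambda>l. u l * complex_of_real (f l)) / complex_of_real (2 * pi)"

definition sp_mean :: "(real \<Rightarrow> real) \<Rightarrow> complex" where
  "sp_mean f = sp_inner (\<lambda>_. 1) f"

definition mean_pi :: "(real \<Rightarrow> real) \<Rightarrow> real" where
  "mean_pi f = integral {0..pi} f / pi"

text \<open>Linear Incremental Privacy; the filter Psi is given as a function of lambda,
  Psi l = Psi(e^{-i l}), so that conj(Psi(e^{-i l})) = cnj (Psi l).\<close>
definition LIP :: "(real \<Rightarrow> complex) \<Rightarrow> (real \<Rightarrow> real) \<Rightarrow> complex" where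
  "LIP Psi f = 1 - (sp_inner Psi f)\<^sup>2 /
      (sp_inner (\<lambda>l. Psi l * cnj (Psi l)) f * sp_mean f)"

definition delta_LIP :: "(real \<Rightarrow> complex) \<Rightarrow> (real \<Rightarrow> real) \<Rightarrow> real \<Rightarrow> bool" where
  "delta_LIP Psi f \<delta> \<longleftrightarrow> LIP Psi f \<in> \<real> \<and> Re (LIP Psi f) \<ge> 1 - \<delta>"

definition class_R :: "(real \<Rightarrow> real) \<Rightarrow> bool" where
  "class_R R \<longleftrightarrow> (\<forall>x\<in>{0..1}. R x \<in> {0..1}) \<and> R 0 = 0 \<and>
                 (\<forall>x\<in>{0..1}. R x + R (1 - x) = 1)"

definition class_R_L :: "(real \<Rightarrow> real) \<Rightarrow> real \<Rightarrow> bool" where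
  "class_R_L R L \<longleftrightarrow> class_R R \<and> L > 0 \<and>
                 (\<forall>x\<in>{0..1}. \<forall>y\<in>{0..1}. \<bar>R x - R y\<bar> \<le> L * \<bar>x - y\<bar>)"

definition R_tilde :: "(real \<Rightarrow> real) \<Rightarrow> real \<Rightarrow> real" where
  "R_tilde R x = sgn x * R \<bar>x\<bar>"

text \<open>Normalised cumulative spectral function of h (h given on [0,pi], extended evenly):
  H(l) = sgn(l) * int_0^{|l|} h / int_0^pi h, so that H(pi) = 1.\<close>
definition H_cum :: "(real \<Rightarrow> real) \<Rightarrow> real \<Rightarrow> real" where
  "H_cum h l = sgn l * (integral {0..\<bar>l\<bar>} h / (pi * mean_pi h))"

definition Psi_mech :: "(real \<Rightarrow> real) \<Rightarrow> (real \<Rightarrow> real) \<Rightarrow> real \<Rightarrow> complex" where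
  "Psi_mech R h l = cis (pi * R_tilde R (H_cum h l))"

definition F_R :: "real \<Rightarrow> (real \<Rightarrow> real) \<Rightarrow> real \<Rightarrow> (real \<Rightarrow> real) set" where
  "F_R L f \<delta> = {h. (\<forall>l\<in>{0..pi}. h l \<ge> 0) \<and> mean_pi h = mean_pi f \<and>
      (\<forall>l\<in>{0..pi}. \<bar>h l - f l\<bar> \<le> sqrt \<delta> * mean_pi f / (L * pi\<^sup>2))}"

end

(*
  Psi_h is all-pass, so LIP = 1 - <Psi,f>^2 / <f>^2, and by evenness of f and conjugate
  symmetry of Psi_h the inner product is real: <Psi,f> = pi^-1 int_0^pi cos(pi R(H)) f.
  Against the weight h itself this integral vanishes: the substitution u = H(lambda) turns it
  into <h>_pi int_0^1 cos(pi R(u)) du, which is 0 because R(1 - u) = 1 - R(u).  Hence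
  <Psi,f> = pi^-1 int_0^pi cos(pi R(H)) (f - h) is bounded by sup |f - h|, and as
  R(1/2) = 1/2 forces L_R >= 1, the tolerance in F_R(f,delta) gives <Psi,f>^2 <= delta <f>^2.

  Since h is only integrable, H need not be differentiable; the substitution is proved by
  comparing both sides over a fine partition, using uniform continuity of the integrand and of H.
*)

theory Submission
  imports Defs
begin

lemma integrable_continuous_scaleR_nonneg:
  fixes g :: "real \<Rightarrow> 'a::euclidean_space" and f :: "real \<Rightarrow> real"
  assumes g: "continuous_on {a..b} g"
    and f: "f integrable_on {a..b}" "\<And>x. x \<in> {a..b} \<Longrightarrow> 0 \<le> f x"
  shows "(\<lambda>x. f x *\<^sub>R g x) integrable_on {a..b}"
proof -
  have "bilinear (\<lambda>z (r::real). r *\<^sub>R (z::'a))"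
    using bounded_bilinear.flip[OF bounded_bilinear_scaleR] bilinear_conv_bounded_bilinear by blast
  moreover have "g \<in> borel_measurable (lebesgue_on {a..b})"
    using g by (simp add: continuous_imp_measurable_on_sets_lebesgue)
  moreover have "bounded (g ` {a..b})"
    using g by (simp add: compact_imp_bounded compact_continuous_image)
  moreover have "f absolutely_integrable_on {a..b}"
    using f by (rule nonnegative_absolutely_integrable_1)
  ultimately have "(\<lambda>x. f x *\<^sub>R g x) absolutely_integrable_on {a..b}"
    using absolutely_integrable_bounded_measurable_product[of "\<lambda>z r. r *\<^sub>R z" g "{a..b}" f]
    by simp
  then show ?thesis
    using absolutely_integrable_on_def by blast
qed

lemma integrable_continuous_mult_nonneg:
  fixes g f :: "real \<Rightarrow> real"
  assumes "continuous_on {a..b} g" "f integrable_on {a..b}" "\<And>x. x \<in> {a..b} \<Longrightarrow> 0 \<le> f x"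
  shows "(\<lambda>x. g x * f x) integrable_on {a..b}"
  using integrable_continuous_scaleR_nonneg[OF assms] by (simp add: mult.commute)

lemma abs_weighted_integral_minus_const_le:
  fixes g w :: "real \<Rightarrow> real"
  assumes w: "w integrable_on {x..y}" "\<And>t. t \<in> {x..y} \<Longrightarrow> 0 \<le> w t"
    and gw: "(\<lambda>t. g t * w t) integrable_on {x..y}"
    and near: "\<And>t. t \<in> {x..y} \<Longrightarrow> \<bar>g t - c\<bar> \<le> e"
  shows "\<bar>integral {x..y} (\<lambda>t. g t * w t) - c * integral {x..y} w\<bar> \<le> e * integral {x..y} w"
proof -
  have cw: "(\<lambda>t. c * w t) integrable_on {x..y}"
    using w(1) by (rule integrable_on_mult_right)
  have "integral {x..y} (\<lambda>t. g t * w t) - c * integral {x..y} w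
      = integral {x..y} (\<lambda>t. (g t - c) * w t)"
    using integral_diff[OF gw cw] by (simp add: left_diff_distrib)
  also have "\<bar>\<dots>\<bar> \<le> integral {x..y} (\<lambda>t. e * w t)"
  proof (rule integral_norm_bound_integral[where 'a=real, simplified])
    show "(\<lambda>t. (g t - c) * w t) integrable_on {x..y}"
      using integrable_diff[OF gw cw] by (simp add: left_diff_distrib)
    show "(\<lambda>t. e * w t) integrable_on {x..y}"
      using w(1) by (rule integrable_on_mult_right)
    show "\<bar>(g t - c) * w t\<bar> \<le> e * w t" if "t \<in> {x..y}" for t
      using near[OF that] w(2)[OF that] by (simp add: abs_mult mult_right_mono)
  qed
  finally show ?thesis by simp
qed

lemma abs_diff_le_if_local_increments_le:
  fixes F G :: "real \<Rightarrow> real"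
  assumes "a \<le> b" "\<eta> > 0"
    and local: "\<And>x y. a \<le> x \<Longrightarrow> x \<le> y \<Longrightarrow> y \<le> b \<Longrightarrow> y - x < \<eta> \<Longrightarrow> \<bar>F y - F x\<bar> \<le> G y - G x"
  shows "\<bar>F b - F a\<bar> \<le> G b - G a"
proof -
  obtain n :: nat where n: "(b - a) / \<eta> < n"
    using reals_Archimedean2 by blast
  have "n > 0"
    using n \<open>a \<le> b\<close> \<open>\<eta> > 0\<close> by (cases n) (auto simp: divide_less_0_iff)
  define x where "x i = a + (b - a) * i / n" for i :: nat
  have "x i \<le> x (Suc i)" for i
    using \<open>a \<le> b\<close> by (simp add: x_def divide_right_mono mult_left_mono)
  moreover have "x (Suc i) - x i < \<eta>" for i
  proof -
    have "x (Suc i) - x i = (b - a) / n"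
      using \<open>n > 0\<close> by (simp add: x_def field_simps)
    also have "\<dots> < \<eta>"
      using n \<open>n > 0\<close> \<open>\<eta> > 0\<close> by (simp add: field_simps)
    finally show ?thesis .
  qed
  moreover have "a \<le> x i" for i
    using \<open>a \<le> b\<close> by (simp add: x_def)
  moreover have "x (Suc i) \<le> b" if "i < n" for i
  proof -
    have "(b - a) * (Suc i / n) \<le> (b - a) * 1"
      using that \<open>a \<le> b\<close> by (intro mult_left_mono) simp_all
    then show ?thesis
      by (simp add: x_def)
  qed
  ultimately have step: "\<bar>F (x (Suc i)) - F (x i)\<bar> \<le> G (x (Suc i)) - G (x i)" if "i < n" for i
    using local that by blast
  have "x 0 = a" "x n = b"
    using \<open>n > 0\<close> by (simp_all add: x_def)
  then have "F b - F a = (\<Sum>i<n. F (x (Suc i)) - F (x i))"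
    using sum_lessThan_telescope[of "\<lambda>i. F (x i)" n] by simp
  also have "\<bar>\<dots>\<bar> \<le> (\<Sum>i<n. G (x (Suc i)) - G (x i))"
    using step by (intro order.trans[OF sum_abs] sum_mono) simp
  also have "\<dots> = G b - G a"
    using \<open>x 0 = a\<close> \<open>x n = b\<close> sum_lessThan_telescope[of "\<lambda>i. G (x i)" n] by simp
  finally show ?thesis .
qed

lemma eq_if_increments_dominated:
  fixes F G :: "real \<Rightarrow> real"
  assumes "a \<le> b"
    and small: "\<And>e. e > 0 \<Longrightarrow> \<exists>\<eta>>0. \<forall>x y. a \<le> x \<longrightarrow> x \<le> y \<longrightarrow> y \<le> b \<longrightarrow> y - x < \<eta> \<longrightarrow>
                  \<bar>F y - F x\<bar> \<le> e * (G y - G x)"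
  shows "F b = F a"
proof -
  have bound: "\<bar>F b - F a\<bar> \<le> e * \<bar>G b - G a\<bar>" if "e > 0" for e
  proof -
    obtain \<eta> where "\<eta> > 0" and \<eta>: "\<forall>x y. a \<le> x \<longrightarrow> x \<le> y \<longrightarrow> y \<le> b \<longrightarrow> y - x < \<eta> \<longrightarrow>
        \<bar>F y - F x\<bar> \<le> e * (G y - G x)"
      using small[OF \<open>e > 0\<close>] by blast
    have "\<bar>F b - F a\<bar> \<le> e * G b - e * G a"
      using \<eta> by (intro abs_diff_le_if_local_increments_le[OF \<open>a \<le> b\<close> \<open>\<eta> > 0\<close>])
        (simp add: right_diff_distrib)
    also have "\<dots> \<le> e * \<bar>G b - G a\<bar>"
      using \<open>e > 0\<close> by (simp add: mult_left_mono flip: right_diff_distrib)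
    finally show ?thesis .
  qed
  have "\<bar>F b - F a\<bar> \<le> 0 + \<epsilon>" if "\<epsilon> > 0" for \<epsilon>
  proof -
    have "\<bar>F b - F a\<bar> \<le> \<epsilon> / (\<bar>G b - G a\<bar> + 1) * \<bar>G b - G a\<bar>"
      using that by (intro bound) (simp add: add_nonneg_pos)
    also have "\<dots> \<le> \<epsilon>"
      using that by (simp add: field_simps)
    finally show ?thesis
      by simp
  qed
  then show ?thesis
    using field_le_epsilon[of "\<bar>F b - F a\<bar>" 0] by simp
qed

lemma integral_eq_indefinite_integral_diff:
  fixes f :: "real \<Rightarrow> 'a::banach"
  assumes "f integrable_on {a..b}" "a \<le> x" "x \<le> y" "y \<le> b"
  shows "integral {x..y} f = integral {a..y} f - integral {a..x} f"
proof -
  have "f integrable_on {a..y}"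
    using integrable_subinterval_real[OF assms(1)] assms by auto
  then have "integral {a..x} f + integral {x..y} f = integral {a..y} f"
    using assms by (intro Henstock_Kurzweil_Integration.integral_combine) auto
  then show ?thesis
    by (simp add: algebra_simps)
qed

lemma indefinite_integral_mono_nonneg:
  fixes w :: "real \<Rightarrow> real"
  assumes w: "w integrable_on {a..b}" "\<And>t. t \<in> {a..b} \<Longrightarrow> 0 \<le> w t"
    and xy: "a \<le> x" "x \<le> y" "y \<le> b"
  shows "integral {a..x} w \<le> integral {a..y} w"
  using integral_eq_indefinite_integral_diff[OF w(1) xy]
    integral_nonneg[OF integrable_subinterval_real[OF w(1)], of x y] w(2) xy
  by force

lemma indefinite_integral_in_range:
  fixes w :: "real \<Rightarrow> real"
  assumes "w integrable_on {a..b}" "\<And>t. t \<in> {a..b} \<Longrightarrow> 0 \<le> w t" "t \<in> {a..b}"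
  shows "integral {a..t} w \<in> {0..integral {a..b} w}"
  using indefinite_integral_mono_nonneg[OF assms(1,2), of a t]
    indefinite_integral_mono_nonneg[OF assms(1,2), of t b] assms(3)
  by simp

lemma normalized_indefinite_integral_in_unit:
  fixes w :: "real \<Rightarrow> real"
  assumes "w integrable_on {a..b}" "\<And>t. t \<in> {a..b} \<Longrightarrow> 0 \<le> w t" "t \<in> {a..b}"
  shows "integral {a..t} w / integral {a..b} w \<in> {0..1}"
  using indefinite_integral_in_range[OF assms] by (auto simp: divide_le_eq_1)

lemma continuous_on_normalized_indefinite_integral:
  fixes w :: "real \<Rightarrow> real"
  assumes "w integrable_on {a..b}"
  shows "continuous_on {a..b} (\<lambda>t. integral {a..t} w / integral {a..b} w)"
  unfolding divide_inverse by (intro continuous_on_mult_right indefinite_integral_continuous_1 assms)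

lemma abs_integral_comp_increment_le:
  fixes w k W :: "real \<Rightarrow> real"
  assumes w: "w integrable_on {x..y}" "\<And>t. t \<in> {x..y} \<Longrightarrow> 0 \<le> w t"
    and kWw: "(\<lambda>t. k (W t) * w t) integrable_on {x..y}"
    and k: "k integrable_on {W x..W y}"
    and mass: "integral {x..y} w = W y - W x"
    and osc_W: "\<And>t. t \<in> {x..y} \<Longrightarrow> \<bar>k (W t) - k (W x)\<bar> \<le> e"
    and osc: "\<And>u. u \<in> {W x..W y} \<Longrightarrow> \<bar>k u - k (W x)\<bar> \<le> e"
  shows "\<bar>integral {x..y} (\<lambda>t. k (W t) * w t) - integral {W x..W y} k\<bar> \<le> 2 * e * (W y - W x)"
proof -
  have "W x \<le> W y"
    using mass integral_nonneg[OF w] by simp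
  have "\<bar>integral {x..y} (\<lambda>t. k (W t) * w t) - k (W x) * (W y - W x)\<bar> \<le> e * (W y - W x)"
    using abs_weighted_integral_minus_const_le[OF w kWw osc_W] mass by simp
  moreover have "\<bar>integral {W x..W y} k - k (W x) * (W y - W x)\<bar> \<le> e * (W y - W x)"
    using abs_weighted_integral_minus_const_le[of "\<lambda>_. 1" "W x" "W y" k] k osc \<open>W x \<le> W y\<close>
    by (simp add: integrable_on_const)
  ultimately show ?thesis
    by linarith
qed

lemma integrable_comp_indefinite_integral_mult:
  fixes w k :: "real \<Rightarrow> real"
  assumes w: "w integrable_on {a..b}" "\<And>t. t \<in> {a..b} \<Longrightarrow> 0 \<le> w t"
    and k: "continuous_on {0..integral {a..b} w} k"
    and xy: "a \<le> x" "y \<le> b"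
  shows "(\<lambda>t. k (integral {a..t} w) * w t) integrable_on {x..y}"
proof (rule integrable_continuous_mult_nonneg)
  show "continuous_on {x..y} (\<lambda>t. k (integral {a..t} w))"
    by (rule continuous_on_compose2[OF k continuous_on_subset[OF indefinite_integral_continuous_1[OF w(1)]]])
       (use xy indefinite_integral_in_range[OF w] in auto)
  show "w integrable_on {x..y}"
    using integrable_subinterval_real[OF w(1)] xy by auto
qed (use xy w(2) in auto)

lemma integral_comp_indefinite_integral_local:
  fixes w k :: "real \<Rightarrow> real"
  assumes w: "w integrable_on {a..b}" "\<And>t. t \<in> {a..b} \<Longrightarrow> 0 \<le> w t"
    and k: "continuous_on {0..integral {a..b} w} k" and "e > 0"
  obtains \<eta> where "\<eta> > 0"
    and "\<And>x y. a \<le> x \<Longrightarrow> x \<le> y \<Longrightarrow> y \<le> b \<Longrightarrow> y - x < \<eta> \<Longrightarrow>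
      \<bar>integral {x..y} (\<lambda>t. k (integral {a..t} w) * w t) - integral {integral {a..x} w..integral {a..y} w} k\<bar>
        \<le> 2 * e * (integral {a..y} w - integral {a..x} w)"
proof -
  define W where "W t = integral {a..t} w" for t
  have W_mono: "W x \<le> W y" if "a \<le> x" "x \<le> y" "y \<le> b" for x y
    using indefinite_integral_mono_nonneg[OF w that] by (simp add: W_def)
  have W_range: "W t \<in> {0..W b}" if "t \<in> {a..b}" for t
    using indefinite_integral_in_range[OF w that] by (simp add: W_def)
  have W_cont: "continuous_on {a..b} W"
    unfolding W_def by (rule indefinite_integral_continuous_1[OF w(1)])
  have k': "continuous_on {0..W b} k"
    using k by (simp add: W_def)
  obtain d where "d > 0"
    and d: "\<And>u v. u \<in> {0..W b} \<Longrightarrow> v \<in> {0..W b} \<Longrightarrow> dist v u < d \<Longrightarrow> dist (k v) (k u) < e"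
    using compact_uniformly_continuous[OF k'] \<open>e > 0\<close> unfolding uniformly_continuous_on_def
    by (metis compact_Icc)
  obtain \<eta> where "\<eta> > 0"
    and \<eta>: "\<And>x y. x \<in> {a..b} \<Longrightarrow> y \<in> {a..b} \<Longrightarrow> dist y x < \<eta> \<Longrightarrow> dist (W y) (W x) < d"
    using compact_uniformly_continuous[OF W_cont] \<open>d > 0\<close> unfolding uniformly_continuous_on_def
    by (metis compact_Icc)
  show ?thesis
  proof (rule that[OF \<open>\<eta> > 0\<close>], fold W_def)
    fix x y
    assume xy: "a \<le> x" "x \<le> y" "y \<le> b" "y - x < \<eta>"
    have "W y - W x < d"
      using \<eta>[of x y] xy W_mono[of x y] by (simp add: dist_real_def)
    then have osc: "\<bar>k u - k (W x)\<bar> \<le> e" if "u \<in> {W x..W y}" for u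
      using d[of "W x" u] that W_range[of x] W_range[of y] xy by (simp add: dist_real_def)
    have osc_W: "\<bar>k (W t) - k (W x)\<bar> \<le> e" if "t \<in> {x..y}" for t
      using osc W_mono[of x t] W_mono[of t y] that xy by simp
    show "\<bar>integral {x..y} (\<lambda>t. k (W t) * w t) - integral {W x..W y} k\<bar> \<le> 2 * e * (W y - W x)"
    proof (rule abs_integral_comp_increment_le[where W = W])
      show "w integrable_on {x..y}"
        using integrable_subinterval_real[OF w(1)] xy by auto
      show "(\<lambda>t. k (W t) * w t) integrable_on {x..y}"
        using integrable_comp_indefinite_integral_mult[OF w k xy(1,3)] by (simp add: W_def)
      show "k integrable_on {W x..W y}"
        using W_range[of x] W_range[of y] xy
        by (intro integrable_continuous_interval continuous_on_subset[OF k']) auto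
      show "integral {x..y} w = W y - W x"
        using integral_eq_indefinite_integral_diff[OF w(1) xy(1-3)] by (simp add: W_def)
    qed (use w(2) xy osc_W osc in auto)
  qed
qed

lemma integral_comp_indefinite_integral:
  fixes w k :: "real \<Rightarrow> real"
  assumes w: "w integrable_on {a..b}" "\<And>t. t \<in> {a..b} \<Longrightarrow> 0 \<le> w t"
    and k: "continuous_on {0..integral {a..b} w} k"
  shows "integral {a..b} (\<lambda>t. k (integral {a..t} w) * w t) = integral {0..integral {a..b} w} k"
proof (cases "a \<le> b")
  case False
  then show ?thesis by simp
next
  case True
  define W where "W t = integral {a..t} w" for t
  \<comment> \<open>F is the defect of the substitution formula on [a, x]; its increments are small
    relative to those of W, uniformly, so F is constant.\<close>
  define F where "F x = integral {a..x} (\<lambda>t. k (W t) * w t) - integral {0..W x} k" for x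
  have increment: "F y - F x = integral {x..y} (\<lambda>t. k (W t) * w t) - integral {W x..W y} k"
    if "a \<le> x" "x \<le> y" "y \<le> b" for x y
  proof -
    have "integral {W x..W y} k = integral {0..W y} k - integral {0..W x} k"
      using indefinite_integral_in_range[OF w, of x] indefinite_integral_in_range[OF w, of y]
        indefinite_integral_mono_nonneg[OF w that] that
      by (intro integral_eq_indefinite_integral_diff[of k 0 "W b"] integrable_continuous_interval)
         (simp_all add: W_def k)
    moreover have "(\<lambda>t. k (W t) * w t) integrable_on {a..b}"
      using integrable_comp_indefinite_integral_mult[OF w k order.refl order.refl] by (simp add: W_def)
    note integral_eq_indefinite_integral_diff[OF this that]
    ultimately show ?thesis
      by (simp add: F_def)
  qed
  have "F b = F a"
  proof (rule eq_if_increments_dominated[OF True, where G = "\<lambda>t. 2 * W t"])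
    fix e :: real
    assume "e > 0"
    obtain \<eta> where "\<eta> > 0" and \<eta>: "\<And>x y. a \<le> x \<Longrightarrow> x \<le> y \<Longrightarrow> y \<le> b \<Longrightarrow> y - x < \<eta> \<Longrightarrow>
        \<bar>integral {x..y} (\<lambda>t. k (integral {a..t} w) * w t)
          - integral {integral {a..x} w..integral {a..y} w} k\<bar>
        \<le> 2 * e * (integral {a..y} w - integral {a..x} w)"
      using integral_comp_indefinite_integral_local[OF w k \<open>e > 0\<close>] by blast
    show "\<exists>\<eta>>0. \<forall>x y. a \<le> x \<longrightarrow> x \<le> y \<longrightarrow> y \<le> b \<longrightarrow> y - x < \<eta> \<longrightarrow>
        \<bar>F y - F x\<bar> \<le> e * (2 * W y - 2 * W x)"
    proof (intro exI[of _ \<eta>] conjI allI impI \<open>\<eta> > 0\<close>)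
      fix x y
      assume xy: "a \<le> x" "x \<le> y" "y \<le> b" "y - x < \<eta>"
      show "\<bar>F y - F x\<bar> \<le> e * (2 * W y - 2 * W x)"
        using increment[OF xy(1-3)] \<eta>[OF xy] by (simp add: W_def algebra_simps)
    qed
  qed
  then show ?thesis
    by (simp add: F_def W_def)
qed

lemma integral_reflect_unit_antisym:
  fixes k :: "real \<Rightarrow> real"
  assumes "\<And>u. u \<in> {0..1} \<Longrightarrow> k (1 - u) = - k u"
  shows "integral {0..1} k = 0"
proof -
  have "integral {0..1} k = integral {-1..0} (\<lambda>x. k (1 + x))"
    using integral_shift_Icc_real[of "-1" 0 k 1] by (simp add: o_def)
  also have "\<dots> = integral {0..1} (\<lambda>u. k (1 - u))"
    using Henstock_Kurzweil_Integration.integral_reflect_real[of 1 0 "\<lambda>u. k (1 - u)"]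
    by (simp only: minus_zero diff_minus_eq_add)
  also have "\<dots> = integral {0..1} (\<lambda>u. - k u)"
    using assms by (intro integral_cong) auto
  finally show ?thesis
    by simp
qed

lemma integral_comp_normalized_indefinite_integral_eq_0:
  fixes h k :: "real \<Rightarrow> real"
  assumes h: "h integrable_on {a..b}" "\<And>t. t \<in> {a..b} \<Longrightarrow> 0 \<le> h t"
    and k: "continuous_on {0..1} k" "\<And>u. u \<in> {0..1} \<Longrightarrow> k (1 - u) = - k u"
  shows "integral {a..b} (\<lambda>t. k (integral {a..t} h / integral {a..b} h) * h t) = 0"
proof (cases "integral {a..b} h = 0")
  case True
  \<comment> \<open>Division by zero makes the normalized integral vanish, leaving k 0 times the integral of h.\<close>
  then show ?thesis
    by simp
next
  case False
  define A where "A = integral {a..b} h"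
  have "A > 0"
    using False integral_nonneg[OF h] by (simp add: A_def)
  have w: "(\<lambda>t. h t / A) integrable_on {a..b}" "\<And>t. t \<in> {a..b} \<Longrightarrow> 0 \<le> h t / A"
    using h \<open>A > 0\<close> by (simp_all add: integrable_on_divide)
  have "integral {a..b} (\<lambda>t. k (integral {a..t} h / A) * h t)
      = integral {a..b} (\<lambda>t. A * (k (integral {a..t} (\<lambda>s. h s / A)) * (h t / A)))"
    using \<open>A > 0\<close> by simp
  also have "\<dots> = A * integral {a..b} (\<lambda>t. k (integral {a..t} (\<lambda>s. h s / A)) * (h t / A))"
    by (rule integral_mult_right)
  also have "\<dots> = A * integral {0..1} k"
    using integral_comp_indefinite_integral[OF w, of k] k(1) \<open>A > 0\<close> by (simp add: A_def)
  also have "\<dots> = 0"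
    using integral_reflect_unit_antisym[of k, OF k(2)] by simp
  finally show ?thesis
    by (simp add: A_def)
qed

lemma abs_integral_antisym_comp_cumulative_le:
  fixes f h k :: "real \<Rightarrow> real"
  assumes k: "continuous_on {0..1} k" "\<And>u. u \<in> {0..1} \<Longrightarrow> k (1 - u) = - k u"
      "\<And>u. u \<in> {0..1} \<Longrightarrow> \<bar>k u\<bar> \<le> 1"
    and h: "h integrable_on {a..b}" "\<And>t. t \<in> {a..b} \<Longrightarrow> 0 \<le> h t"
    and f: "f integrable_on {a..b}" "\<And>t. t \<in> {a..b} \<Longrightarrow> 0 \<le> f t"
    and close: "\<And>t. t \<in> {a..b} \<Longrightarrow> \<bar>h t - f t\<bar> \<le> c"
    and "a \<le> b"
  shows "\<bar>integral {a..b} (\<lambda>t. k (integral {a..t} h / integral {a..b} h) * f t)\<bar> \<le> (b - a) * c"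
proof -
  define H where "H t = integral {a..t} h / integral {a..b} h" for t
  have H_unit: "H t \<in> {0..1}" if "t \<in> {a..b}" for t
    using normalized_indefinite_integral_in_unit[OF h that] by (simp add: H_def)
  have kH: "continuous_on {a..b} (\<lambda>t. k (H t))"
    unfolding H_def
    by (rule continuous_on_compose2[OF k(1) continuous_on_normalized_indefinite_integral[OF h(1)]])
       (use H_unit in \<open>auto simp: H_def\<close>)
  have kHf: "(\<lambda>t. k (H t) * f t) integrable_on {a..b}"
    and kHh: "(\<lambda>t. k (H t) * h t) integrable_on {a..b}"
    using integrable_continuous_mult_nonneg[OF kH] f h by auto
  have "integral {a..b} (\<lambda>t. k (H t) * f t) = integral {a..b} (\<lambda>t. k (H t) * (f t - h t))"
    using integral_diff[OF kHf kHh] integral_comp_normalized_indefinite_integral_eq_0[of h a b k, OF h k(1,2)]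
    by (simp add: right_diff_distrib H_def)
  also have "\<bar>\<dots>\<bar> \<le> integral {a..b} (\<lambda>t. c)"
  proof (rule integral_norm_bound_integral[where 'a=real, simplified])
    show "(\<lambda>t. k (H t) * (f t - h t)) integrable_on {a..b}"
      using integrable_diff[OF kHf kHh] by (simp add: right_diff_distrib)
    show "\<bar>k (H t) * (f t - h t)\<bar> \<le> c" if "t \<in> {a..b}" for t
      using mult_mono[OF k(3)[OF H_unit[OF that]] close[OF that]]
      by (simp add: abs_mult abs_minus_commute)
  qed (simp add: integrable_on_const)
  also have "\<dots> = (b - a) * c"
    using \<open>a \<le> b\<close> by simp
  finally show ?thesis
    by (simp add: H_def)
qed

lemma sp_inner_conj_symmetric:
  fixes Psi :: "real \<Rightarrow> complex" and f :: "real \<Rightarrow> real"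
  assumes Psi: "continuous_on {0..pi} Psi" "\<And>l. l \<in> {0..pi} \<Longrightarrow> Psi (-l) = cnj (Psi l)"
    and f: "f integrable_on {0..pi}" "\<And>l. l \<in> {0..pi} \<Longrightarrow> 0 \<le> f l"
      "\<And>l. l \<in> {0..pi} \<Longrightarrow> f (-l) = f l"
  shows "sp_inner Psi f = of_real (integral {0..pi} (\<lambda>l. Re (Psi l) * f l) / pi)"
proof -
  define g where "g = (\<lambda>l. Psi l * of_real (f l))"
  have "g integrable_on {0..pi}"
    using integrable_continuous_scaleR_nonneg[OF Psi(1) f(1,2)]
    by (simp add: g_def scaleR_conv_of_real mult.commute)
  then obtain I where I: "(g has_integral I) {0..pi}"
    unfolding integrable_on_def by blast
  have "((\<lambda>l. g (-l)) has_integral cnj I) {0..pi}"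
    using has_integral_cnj[of g, THEN iffD2, OF I]
    by (rule has_integral_eq[rotated]) (simp add: g_def Psi(2) f(3))
  then have "(g has_integral cnj I) {-pi..0}"
    using has_integral_reflect_real[of "\<lambda>l. g (-l)" _ pi 0] by simp
  then have "(g has_integral (cnj I + I)) {-pi..pi}"
    using has_integral_combine[of "-pi" 0 pi g _ I] I by simp
  then have "(g has_integral of_real (2 * Re I)) {-pi..pi}"
    by (simp only: add.commute[of "cnj I"] complex_add_cnj)
  moreover have "Re I = integral {0..pi} (\<lambda>l. Re (Psi l) * f l)"
    using has_integral_Re[OF I] by (simp add: g_def integral_unique)
  ultimately show ?thesis
    unfolding sp_inner_def g_def by (simp add: integral_unique)
qed

lemma sp_mean_even:
  assumes "f integrable_on {0..pi}" "\<And>l. l \<in> {0..pi} \<Longrightarrow> 0 \<le> f l"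
    "\<And>l. l \<in> {0..pi} \<Longrightarrow> f (-l) = f l"
  shows "sp_mean f = of_real (mean_pi f)"
  using sp_inner_conj_symmetric[of "\<lambda>_. 1" f] assms by (simp add: sp_mean_def mean_pi_def)

lemma LIP_all_pass:
  assumes "\<And>l. Psi l * cnj (Psi l) = 1"
  shows "LIP Psi f = 1 - (sp_inner Psi f)\<^sup>2 / (sp_mean f)\<^sup>2"
  using assms by (simp add: LIP_def sp_mean_def power2_eq_square)

lemma delta_LIP_all_pass:
  assumes "\<And>l. Psi l * cnj (Psi l) = 1"
    and "sp_inner Psi f = of_real c" "sp_mean f = of_real m"
    and "\<bar>c\<bar> \<le> sqrt \<delta> * m" "0 \<le> \<delta>"
  shows "delta_LIP Psi f \<delta>"
proof -
  have "\<bar>c\<bar>\<^sup>2 \<le> (sqrt \<delta> * m)\<^sup>2"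
    using assms(4) by (intro power_mono) simp_all
  then have "c\<^sup>2 \<le> \<delta> * m\<^sup>2"
    using assms(5) by (simp add: power_mult_distrib)
  then have "1 - \<delta> \<le> 1 - c\<^sup>2 / m\<^sup>2"
    \<comment> \<open>For m = 0 the quotient is 0 by division by zero, so LIP is 1.\<close>
    using assms(5) by (cases "m = 0") (simp_all add: divide_le_eq)
  moreover have "LIP Psi f = of_real (1 - c\<^sup>2 / m\<^sup>2)"
    using LIP_all_pass[OF assms(1)] assms(2,3) by simp
  ultimately show ?thesis
    by (simp add: delta_LIP_def)
qed

lemma Psi_mech_uminus: "Psi_mech R h (-l) = cnj (Psi_mech R h l)"
  by (simp add: Psi_mech_def cis_cnj H_cum_def R_tilde_def sgn_mult)

lemma Psi_mech_mult_cnj: "Psi_mech R h l * cnj (Psi_mech R h l) = 1"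
  by (simp add: Psi_mech_def cis_cnj cis_mult)

lemma R_tilde_nonneg: "R 0 = 0 \<Longrightarrow> 0 \<le> x \<Longrightarrow> R_tilde R x = R x"
  by (cases "x = 0") (simp_all add: R_tilde_def)

lemma H_cum_nonneg: "0 \<le> l \<Longrightarrow> H_cum h l = integral {0..l} h / integral {0..pi} h"
  by (cases "l = 0") (simp_all add: H_cum_def mean_pi_def)

lemma class_R_L_ge_1:
  assumes "class_R_L R L"
  shows "1 \<le> L"
proof -
  have R: "R 0 = 0" "\<forall>x\<in>{0..1}. R x + R (1 - x) = 1"
    and lip: "\<forall>x\<in>{0..1}. \<forall>y\<in>{0..1}. \<bar>R x - R y\<bar> \<le> L * \<bar>x - y\<bar>"
    using assms unfolding class_R_L_def class_R_def by auto
  have "R (1/2) = 1/2"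
    using R(2)[rule_format, of "1/2"] by simp
  then show ?thesis
    using lip[rule_format, of "1/2" 0] R(1) by simp
qed

lemma class_R_L_continuous_on: "class_R_L R L \<Longrightarrow> continuous_on {0..1} R"
  by (rule lipschitz_on_continuous_on[where L = L])
     (auto simp: class_R_L_def lipschitz_on_def dist_real_def)

lemma class_R_cos_reflect:
  assumes "class_R R" "u \<in> {0..1}"
  shows "cos (pi * R (1 - u)) = - cos (pi * R u)"
proof -
  have "R (1 - u) = 1 - R u"
    using assms unfolding class_R_def by (simp add: eq_diff_eq add.commute)
  then show ?thesis
    by (simp add: right_diff_distrib)
qed

lemma sp_inner_Psi_mech:
  fixes R h f :: "real \<Rightarrow> real"
  assumes R: "R 0 = 0" "continuous_on {0..1} R"
    and h: "h integrable_on {0..pi}" "\<And>l. l \<in> {0..pi} \<Longrightarrow> 0 \<le> h l"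
    and f: "f integrable_on {0..pi}" "\<And>l. l \<in> {0..pi} \<Longrightarrow> 0 \<le> f l"
      "\<And>l. l \<in> {0..pi} \<Longrightarrow> f (-l) = f l"
  shows "sp_inner (Psi_mech R h) f =
    of_real (integral {0..pi} (\<lambda>l. cos (pi * R (integral {0..l} h / integral {0..pi} h)) * f l) / pi)"
proof -
  define H where "H l = integral {0..l} h / integral {0..pi} h" for l
  have H_unit: "H l \<in> {0..1}" if "l \<in> {0..pi}" for l
    using normalized_indefinite_integral_in_unit[OF h that] by (simp add: H_def)
  have Psi_eq: "Psi_mech R h l = cis (pi * R (H l))" if "l \<in> {0..pi}" for l
    using that H_unit[OF that] by (simp add: Psi_mech_def H_cum_nonneg R_tilde_nonneg R(1) H_def)
  have "continuous_on {0..pi} (\<lambda>l. R (H l))"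
    unfolding H_def
    by (rule continuous_on_compose2[OF R(2) continuous_on_normalized_indefinite_integral[OF h(1)]])
       (use H_unit in \<open>auto simp: H_def\<close>)
  then have "continuous_on {0..pi} (\<lambda>l. cis (pi * R (H l)))"
    by (intro continuous_intros)
  then have "continuous_on {0..pi} (Psi_mech R h)"
    by (rule continuous_on_eq) (simp add: Psi_eq)
  then have "sp_inner (Psi_mech R h) f = of_real (integral {0..pi} (\<lambda>l. Re (Psi_mech R h l) * f l) / pi)"
    using sp_inner_conj_symmetric[of "Psi_mech R h" f, OF _ _ f] Psi_mech_uminus by blast
  also have "integral {0..pi} (\<lambda>l. Re (Psi_mech R h l) * f l) = integral {0..pi} (\<lambda>l. cos (pi * R (H l)) * f l)"
    using Psi_eq by (intro integral_cong) simp
  finally show ?thesis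
    by (simp add: H_def)
qed

lemma sp_inner_Psi_mech_bound:
  fixes R h f :: "real \<Rightarrow> real"
  assumes R: "class_R R" "continuous_on {0..1} R"
    and h: "h integrable_on {0..pi}" "\<And>l. l \<in> {0..pi} \<Longrightarrow> 0 \<le> h l"
    and f: "f integrable_on {0..pi}" "\<And>l. l \<in> {0..pi} \<Longrightarrow> 0 \<le> f l"
      "\<And>l. l \<in> {0..pi} \<Longrightarrow> f (-l) = f l"
    and close: "\<And>l. l \<in> {0..pi} \<Longrightarrow> \<bar>h l - f l\<bar> \<le> c"
  obtains J where "sp_inner (Psi_mech R h) f = of_real J" and "\<bar>J\<bar> \<le> c"
proof -
  define I where "I = integral {0..pi} (\<lambda>l. cos (pi * R (integral {0..l} h / integral {0..pi} h)) * f l)"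
  have "R 0 = 0"
    using R(1) by (simp add: class_R_def)
  have "continuous_on {0..1} (\<lambda>u. cos (pi * R u))"
    using R(2) by (intro continuous_intros)
  then have "\<bar>I\<bar> \<le> (pi - 0) * c"
    unfolding I_def
    by (rule abs_integral_antisym_comp_cumulative_le[where k = "\<lambda>u. cos (pi * R u)", OF _ _ _ h f(1,2) close])
       (simp_all add: class_R_cos_reflect[OF R(1)])
  then have "\<bar>I / pi\<bar> \<le> c"
    by (simp add: divide_le_eq mult.commute)
  moreover have "sp_inner (Psi_mech R h) f = of_real (I / pi)"
    unfolding I_def by (rule sp_inner_Psi_mech[of R h f, OF \<open>R 0 = 0\<close> R(2) h f])
  ultimately show thesis
    by (rule that[rotated])
qed

theorem theorem2:
  fixes f h R :: "real \<Rightarrow> real" and L \<delta> :: real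
  assumes f_int: "f integrable_on {-pi..pi}"
    and f_nonneg: "\<forall>l\<in>{-pi..pi}. f l \<ge> 0"
    and f_even: "\<forall>l\<in>{-pi..pi}. f (-l) = f l"
    and R: "class_R_L R L"
    and \<delta>: "0 \<le> \<delta>" "\<delta> < 1"
    and h_int: "h integrable_on {0..pi}"
    and hF: "h \<in> F_R L f \<delta>"
  shows "delta_LIP (Psi_mech R h) f \<delta>"
proof -
  define m where "m = mean_pi f"
  have f: "f integrable_on {0..pi}" "\<And>l. l \<in> {0..pi} \<Longrightarrow> 0 \<le> f l"
    "\<And>l. l \<in> {0..pi} \<Longrightarrow> f (-l) = f l"
    using integrable_subinterval_real[OF f_int] f_nonneg f_even by auto
  have h: "\<And>l. l \<in> {0..pi} \<Longrightarrow> 0 \<le> h l"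
    "\<And>l. l \<in> {0..pi} \<Longrightarrow> \<bar>h l - f l\<bar> \<le> sqrt \<delta> * m / (L * pi\<^sup>2)"
    using hF by (auto simp: F_R_def m_def)
  obtain J where J: "sp_inner (Psi_mech R h) f = of_real J" "\<bar>J\<bar> \<le> sqrt \<delta> * m / (L * pi\<^sup>2)"
    using sp_inner_Psi_mech_bound[of R h f, OF _ class_R_L_continuous_on[OF R] h_int h(1) f h(2)] R
    unfolding class_R_L_def by blast
  have "1 \<le> L * pi\<^sup>2"
    using mult_mono[OF class_R_L_ge_1[OF R] one_le_power[of pi 2]] class_R_L_ge_1[OF R] pi_gt3
    by simp
  moreover have "0 \<le> m"
    using integral_nonneg[OF f(1,2)] by (simp add: m_def mean_pi_def)
  ultimately have "\<bar>J\<bar> \<le> sqrt \<delta> * m"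
    using J(2) divide_left_mono[of 1 "L * pi\<^sup>2" "sqrt \<delta> * m"] \<delta>(1) by simp
  moreover have "sp_mean f = of_real m"
    unfolding m_def by (rule sp_mean_even[of f, OF f])
  ultimately show ?thesis
    using delta_LIP_all_pass[of "Psi_mech R h", OF Psi_mech_mult_cnj J(1)] \<delta>(1) by blast
qed

end
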